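(* Let $0\le\gamma<1$, $k\in[0,1]$, and let $f=h+\overline{g}$ be a harmonic mapping on $\Omega_\gamma$, where $h,g$ are analytic on $\Omega_\gamma$, $|h(z)|\le 1$ for all $z\in\Omega_\gamma$, $|g'(z)|\le k|h'(z)|$ for all $z\in\Omega_\gamma$, and $h(z)=\sum_{n=0}^\infty a_n z^n$, $g(z)=\sum_{n=1}^\infty b_n z^n$ for $z\in\mathbb{D}$ (so $g(0)=0$). Then $$\sum_{n=0}^\infty |a_n| r^n+\sum_{n=1}^\infty |b_n| r^n\le 1\qquad\text{for all } 0\le r\le r_0:=\frac{1+\gamma}{3+2k+\gamma}.$$ The radius $r_0$ is best possible: for every $r\in(r_0,1)$ there is such a mapping $f$ for which the left-hand side exceeds $1$.
   Context: $\mathbb{D}$ is the open unit disk. For $0\le\gamma<1$, $\Omega_\gamma=\{z\in\mathbb{C}: |z+\frac{\gamma}{1-\gamma}|<\frac{1}{1-\gamma}\}$, a disk containing $\mathbb{D}$. A harmonic mapping on a simply connected domain is a complex-valued function $f$ with $\Delta f=0$; it can be written $f=h+\overline{g}$ with $h,g$ analytic. *)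

theory Defs
  imports "HOL-Complex_Analysis.Complex_Analysis"
begin

definition Omega :: "real \<Rightarrow> complex set" where
  "Omega \<gamma> = ball (- complex_of_real (\<gamma> / (1 - \<gamma>))) (1 / (1 - \<gamma>))"

text \<open>The class of harmonic mappings f = h + conj g on Omega_gamma considered in the theorem,
  together with the Taylor coefficients a (of h) and b (of g, indexed from 1) on the unit disk.\<close>
definition admissible ::
  "real \<Rightarrow> real \<Rightarrow> (complex \<Rightarrow> complex) \<Rightarrow> (complex \<Rightarrow> complex) \<Rightarrow> (nat \<Rightarrow> complex) \<Rightarrow> (nat \<Rightarrow> complex) \<Rightarrow> bool"
  where
  "admissible \<gamma> k h g a b \<longleftrightarrow>
     h holomorphic_on Omega \<gamma> \<and> g holomorphic_on Omega \<gamma> \<and>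
     (\<forall>z\<in>Omega \<gamma>. norm (h z) \<le> 1) \<and>
     (\<forall>z\<in>Omega \<gamma>. norm (deriv g z) \<le> k * norm (deriv h z)) \<and>
     (\<forall>z\<in>ball 0 1. (\<lambda>n. a n * z ^ n) sums h z) \<and>
     (\<forall>z\<in>ball 0 1. (\<lambda>n. b (n + 1) * z ^ (n + 1)) sums g z)"

definition bohr_sum :: "(nat \<Rightarrow> complex) \<Rightarrow> (nat \<Rightarrow> complex) \<Rightarrow> real \<Rightarrow> real" where
  "bohr_sum a b r = (\<Sum>n. norm (a n) * r ^ n) + (\<Sum>n. norm (b (n + 1)) * r ^ (n + 1))"

end

theory Submission
  imports Defs
begin

(* Composing h with the Moebius map disk_to_Omega from the unit disk onto Omega_gamma gives a
   function F bounded by 1 on the disk, whose Taylor coefficients satisfy Wiener's inequality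
   |c_m| <= 1 - |c_0|^2 (Schwarz-Pick at 0, applied to the average of F over the m-th roots of
   unity).  Since h = F o Omega_to_disk near 0, and the powers of Omega_to_disk z =
   z / (1 + gamma - gamma z) have nonnegative coefficients whose n-th coefficients sum to
   1 / (1 + gamma), this gives |a_n| <= (1 - |a_0|^2) / (1 + gamma) for n >= 1.
   Parseval's identity on circles for h' and g', together with |g'| <= k |h'|, yields
   sum |b_n|^2 r^n <= k^2 sum |a_n|^2 r^n after integrating twice in r, and an AM-GM estimate
   then bounds the Bohr sum by A + (1 + k) (1 - A^2) / (1 + gamma) * r / (1 - r) with
   A = |a_0|, which is at most 1 for r <= r0.
   For sharpness take h = (s - w) / (1 - s w) with w = Omega_to_disk z, and g = k (h - s):
   for s close to 1 its Bohr sum exceeds 1 at every r > r0. *)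

section \<open>Schwarz-Pick at the origin and Wiener's inequality\<close>

lemma Schwarz_Pick_at_0_strict:
  fixes G :: "complex \<Rightarrow> complex"
  assumes hol: "G holomorphic_on ball 0 1" and bd: "\<And>w. norm w < 1 \<Longrightarrow> norm (G w) < 1"
  shows "norm (deriv G 0) \<le> 1 - (norm (G 0))\<^sup>2"
proof -
  define c where "c = G 0"
  have c: "norm c < 1" using bd[of 0] by (simp add: c_def)
  define H where "H = Moebius_function 0 c \<circ> G"
  have holH: "H holomorphic_on ball 0 1"
    unfolding H_def
    by (rule holomorphic_on_compose_gen[OF hol Moebius_function_holomorphic[OF c]]) (use bd in auto)
  have "norm (deriv H 0) \<le> 1"
    by (rule Schwarz_Lemma(2)[of H 0])
       (use holH bd c Moebius_function_norm_lt_1 in \<open>auto simp: H_def c_def Moebius_function_eq_zero\<close>)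
  have cc: "1 - cnj c * c = of_real (1 - (norm c)\<^sup>2)"
    using complex_norm_square[of c] by (simp add: mult.commute)
  have cc0: "0 < 1 - (norm c)\<^sup>2" using c by (simp add: abs_square_less_1)
  hence den: "1 - cnj c * c \<noteq> 0" unfolding cc by (metis of_real_eq_0_iff less_irrefl)
  have dG: "(G has_field_derivative deriv G 0) (at 0)"
    using hol by (intro holomorphic_derivI[of _ "ball 0 1"]) auto
  have "(H has_field_derivative
          ((1 - cnj c * c) * deriv G 0) / ((1 - cnj c * c) * (1 - cnj c * c))) (at 0)"
    unfolding H_def o_def Moebius_function_simple
    using dG den by (auto intro!: derivative_eq_intros simp: c_def algebra_simps)
  hence "(H has_field_derivative deriv G 0 / (1 - cnj c * c)) (at 0)"
    using den by simp
  hence "norm (deriv H 0) = norm (deriv G 0) / (1 - (norm c)\<^sup>2)"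
    using cc0 by (simp add: DERIV_imp_deriv norm_divide cc del: of_real_diff)
  then show ?thesis
    using \<open>norm (deriv H 0) \<le> 1\<close> cc0 by (simp add: c_def divide_le_eq)
qed

lemma Schwarz_Pick_at_0:
  fixes G :: "complex \<Rightarrow> complex"
  assumes hol: "G holomorphic_on ball 0 1" and bd: "\<And>w. norm w < 1 \<Longrightarrow> norm (G w) \<le> 1"
  shows "norm (deriv G 0) \<le> 1 - (norm (G 0))\<^sup>2"
proof (rule tendsto_le[of "at_left 1"])
  show "((\<lambda>t. t * norm (deriv G 0)) \<longlongrightarrow> norm (deriv G 0)) (at_left 1)"
    by (auto intro!: tendsto_eq_intros)
  show "((\<lambda>t. 1 - t\<^sup>2 * (norm (G 0))\<^sup>2) \<longlongrightarrow> 1 - (norm (G 0))\<^sup>2) (at_left (1::real))"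
    by (auto intro!: tendsto_eq_intros)
  have "t * norm (deriv G 0) \<le> 1 - t\<^sup>2 * (norm (G 0))\<^sup>2" if t: "0 < t" "t < 1" for t :: real
  proof -
    have "norm (of_real t * G w) < 1" if "norm w < 1" for w
    proof -
      have "norm (of_real t * G w) = t * norm (G w)" using t by (simp add: norm_mult)
      also have "\<dots> \<le> t" using bd[OF that] t by (simp add: mult_left_le)
      finally show ?thesis using t by linarith
    qed
    moreover have "(\<lambda>w. of_real t * G w) holomorphic_on ball 0 1"
      by (intro holomorphic_intros hol)
    moreover have "deriv (\<lambda>w. of_real t * G w) 0 = of_real t * deriv G 0"
      by (rule deriv_cmult) (use hol in \<open>auto intro!: holomorphic_on_imp_differentiable_at\<close>)
    ultimately show ?thesis
      using Schwarz_Pick_at_0_strict[of "\<lambda>w. of_real t * G w"] hol t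
      by (simp add: norm_mult power_mult_distrib)
  qed
  moreover have "eventually (\<lambda>t. t \<in> {0<..<1}) (at_left (1::real))"
    by (rule eventually_at_left_real) simp
  ultimately show "\<forall>\<^sub>F t in at_left 1. t * norm (deriv G 0) \<le> 1 - t\<^sup>2 * (norm (G 0))\<^sup>2"
    by (metis (mono_tags, lifting) eventually_mono greaterThanLessThan_iff)
qed auto

lemma sum_powers_root_of_unity:
  assumes m: "m > 0"
  shows "(\<Sum>j<m. (cis (2 * pi / real m) ^ n) ^ j) = (if m dvd n then of_nat m else 0)"
proof -
  have unit: "cis (2 * pi / real m) ^ m = 1"
    using m unfolding Complex.DeMoivre by simp
  define x where "x = cis (2 * pi / real m) ^ n"
  have xm: "x ^ m = 1"
    by (simp add: x_def unit flip: power_mult) (simp add: power_mult mult.commute[of n] unit)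
  show ?thesis
  proof (cases "m dvd n")
    case True
    then obtain q where "n = m * q" by blast
    hence "x = 1" by (simp add: x_def power_mult unit)
    thus ?thesis using True by (simp add: x_def)
  next
    case False
    have "x \<noteq> 1"
    proof
      assume "x = 1"
      hence "cos (2 * pi * real n / real m) = 1" by (simp add: x_def Complex.DeMoivre complex_eq_iff mult_ac)
      then obtain k :: int where "2 * pi * real n / real m = real_of_int k * 2 * pi"
        by (subst (asm) cos_one_2pi_int) blast
      hence "real n = real m * real_of_int k" using m by (simp add: field_simps)
      hence "int n = int m * k" by (metis of_int_eq_iff of_int_mult of_int_of_nat_eq)
      with False show False by (metis dvd_triv_left int_dvd_int_iff)
    qed
    with xm False show ?thesis by (simp add: geometric_sum x_def[symmetric])
  qed
qed

lemma exists_nth_root_norm: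
  fixes w :: complex
  assumes m: "m > 0"
  obtains z where "z ^ m = w" "norm z = root m (norm w)"
proof (cases "w = 0")
  case True
  with m that[of 0] show ?thesis by simp
next
  case False
  define z where "z = of_real (root m (norm w)) * cis (Arg w / m)"
  have "\<forall>a\<in>{z. z ^ m = 1}. z * a \<in> {z. z ^ m = w}"
    using bij_betwE[OF bij_betw_nth_root_unity[OF False m]] by (simp add: z_def)
  from this[rule_format, of 1] have "z * 1 \<in> {z. z ^ m = w}" by simp
  moreover have "norm z = root m (norm w)"
    by (simp add: z_def norm_mult real_root_ge_zero)
  ultimately show ?thesis using that by auto
qed

lemma powser_root_of_unity_filter:
  fixes F :: "complex \<Rightarrow> complex"
  assumes hol: "F holomorphic_on ball 0 1" and m: "m > 0" and z: "norm z < 1"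
  defines "c \<equiv> \<lambda>n. (deriv ^^ n) F 0 / fact n" and "\<epsilon> \<equiv> cis (2 * pi / real m)"
  shows "(\<lambda>q. c (q * m) * (z ^ m) ^ q) sums ((\<Sum>j<m. F (\<epsilon> ^ j * z)) / of_nat m)"
proof -
  have pw: "(\<lambda>n. c n * w ^ n) sums F w" if "norm w < 1" for w
    using holomorphic_power_series[OF hol, of w] that by (simp add: c_def)
  have "(\<lambda>n. \<Sum>j<m. c n * (\<epsilon> ^ j * z) ^ n) sums (\<Sum>j<m. F (\<epsilon> ^ j * z))"
    using z by (intro sums_sum pw) (simp add: \<epsilon>_def norm_mult norm_power)
  hence "(\<lambda>n. (\<Sum>j<m. c n * (\<epsilon> ^ j * z) ^ n) / of_nat m) sums ((\<Sum>j<m. F (\<epsilon> ^ j * z)) / of_nat m)"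
    by (rule sums_divide)
  moreover have "(\<Sum>j<m. c n * (\<epsilon> ^ j * z) ^ n) / of_nat m = (if m dvd n then c n * z ^ n else 0)" for n
  proof -
    have "(\<Sum>j<m. c n * (\<epsilon> ^ j * z) ^ n) = c n * z ^ n * (\<Sum>j<m. (\<epsilon> ^ n) ^ j)"
      by (simp add: sum_distrib_left power_mult_distrib power_mult[symmetric] mult.commute mult.left_commute)
    thus ?thesis using m by (simp add: sum_powers_root_of_unity \<epsilon>_def)
  qed
  ultimately have "(\<lambda>n. if m dvd n then c n * z ^ n else 0) sums ((\<Sum>j<m. F (\<epsilon> ^ j * z)) / of_nat m)"
    by simp
  moreover have "strict_mono (\<lambda>q::nat. q * m)" using m by (intro strict_monoI) simp
  moreover have "\<not> m dvd n" if "n \<notin> range (\<lambda>q. q * m)" for n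
    using that by (metis dvdE mult.commute rangeI)
  ultimately have "(\<lambda>q. if m dvd q * m then c (q * m) * z ^ (q * m) else 0)
      sums ((\<Sum>j<m. F (\<epsilon> ^ j * z)) / of_nat m)"
    by (subst sums_mono_reindex) auto
  moreover have "z ^ (q * m) = (z ^ m) ^ q" for q by (metis power_mult mult.commute)
  ultimately show ?thesis by simp
qed

lemma Wiener_coefficient_bound:
  fixes F :: "complex \<Rightarrow> complex"
  assumes hol: "F holomorphic_on ball 0 1" and bd: "\<And>w. norm w < 1 \<Longrightarrow> norm (F w) \<le> 1"
    and m: "m > 0"
  shows "norm ((deriv ^^ m) F 0 / fact m) \<le> 1 - (norm (F 0))\<^sup>2"
proof -
  define c where "c = (\<lambda>n. (deriv ^^ n) F 0 / fact n)"
  define \<epsilon> where "\<epsilon> = cis (2 * pi / real m)"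
  have "\<exists>S. (\<lambda>q. c (q * m) * w ^ q) sums S \<and> norm S \<le> 1" if w: "norm w < 1" for w
  proof -
    obtain z where z: "z ^ m = w" "norm z = root m (norm w)"
      using exists_nth_root_norm[OF m] by blast
    hence z1: "norm z < 1" using w m by simp
    have "norm (\<Sum>j<m. F (\<epsilon> ^ j * z)) \<le> (\<Sum>j<m. 1)"
      using z1 by (intro order.trans[OF norm_sum] sum_mono bd) (simp add: \<epsilon>_def norm_mult norm_power)
    hence "norm ((\<Sum>j<m. F (\<epsilon> ^ j * z)) / of_nat m) \<le> 1"
      using m by (simp add: norm_divide)
    thus ?thesis
      using powser_root_of_unity_filter[OF hol m z1] z(1) by (auto simp: c_def \<epsilon>_def)
  qed
  then obtain S where S: "\<And>w. norm w < 1 \<Longrightarrow> (\<lambda>q. c (q * m) * w ^ q) sums S w \<and> norm (S w) \<le> 1"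
    by metis
  \<comment> \<open>G (w ^ m) averages F over the m-th roots of unity times w; its linear coefficient is c m\<close>
  define C where "C = Abs_fps (\<lambda>q. c (q * m))"
  have "fps_conv_radius C \<ge> 1"
    unfolding fps_conv_radius_def
  proof (rule conv_radius_geI_ex')
    fix r :: real assume "0 < r" "ereal r < 1"
    thus "summable (\<lambda>n. fps_nth C n * complex_of_real r ^ n)"
      using S[of "of_real r"] by (auto simp: C_def sums_iff)
  qed
  hence rad: "ball 0 1 \<subseteq> eball 0 (fps_conv_radius C)" "fps_conv_radius C > 0"
    by (auto intro!: ball_eball_mono simp: one_ereal_def) (metis ereal_less(2) order.strict_trans2 zero_less_one)
  define G where "G = eval_fps C"
  have "G holomorphic_on ball 0 1" unfolding G_def by (rule holomorphic_on_eval_fps[OF rad(1)])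
  moreover have "norm (G w) \<le> 1" if "norm w < 1" for w
    using S[OF that] by (auto simp: G_def eval_fps_def C_def sums_iff)
  moreover have "G 0 = F 0" by (simp add: G_def eval_fps_at_0 C_def c_def)
  moreover have "deriv G 0 = c m"
    using fps_nth_conv_deriv[OF rad(2), of 1] by (simp add: G_def C_def)
  ultimately show ?thesis using Schwarz_Pick_at_0[of G] by (simp add: c_def)
qed

section \<open>The disk Omega_gamma and its Taylor coefficient bound\<close>

definition Omega_to_disk :: "real \<Rightarrow> complex \<Rightarrow> complex" where
  "Omega_to_disk \<gamma> z = z / (1 + of_real \<gamma> - of_real \<gamma> * z)"

definition disk_to_Omega :: "real \<Rightarrow> complex \<Rightarrow> complex" where
  "disk_to_Omega \<gamma> u = (1 + of_real \<gamma>) * u / (1 + of_real \<gamma> * u)"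

lemma mem_Omega_iff:
  assumes g: "0 \<le> \<gamma>" "\<gamma> < 1"
  shows "z \<in> Omega \<gamma> \<longleftrightarrow> norm z < norm (1 + of_real \<gamma> - of_real \<gamma> * z)"
proof -
  define E where "E = (1 - \<gamma>) * ((Re z)\<^sup>2 + (Im z)\<^sup>2) + 2 * \<gamma> * Re z - (1 + \<gamma>)"
  \<comment> \<open>both inequalities reduce to E < 0\<close>
  have "z \<in> Omega \<gamma> \<longleftrightarrow> norm (z + of_real (\<gamma> / (1 - \<gamma>))) < 1 / (1 - \<gamma>)"
    by (simp add: Omega_def dist_norm norm_minus_commute add.commute)
  also have "\<dots> \<longleftrightarrow> norm (of_real (1 - \<gamma>) * z + of_real \<gamma>) < 1"
  proof -
    have "of_real (1 - \<gamma>) * (z + of_real (\<gamma> / (1 - \<gamma>))) = of_real (1 - \<gamma>) * z + of_real \<gamma>"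
      using g by (simp add: distrib_left flip: of_real_mult)
    hence "norm (of_real (1 - \<gamma>) * z + of_real \<gamma>) = (1 - \<gamma>) * norm (z + of_real (\<gamma> / (1 - \<gamma>)))"
      using g by (metis norm_mult norm_of_real abs_of_pos diff_gt_0_iff_gt)
    thus ?thesis using g by (simp add: pos_less_divide_eq mult.commute)
  qed
  also have "\<dots> \<longleftrightarrow> E < 0"
  proof -
    have "(norm (of_real (1 - \<gamma>) * z + of_real \<gamma>))\<^sup>2 - 1 = (1 - \<gamma>) * E"
      unfolding cmod_power2 by (simp add: E_def power2_eq_square algebra_simps)
    moreover have "(1 - \<gamma>) * E < 0 \<longleftrightarrow> E < 0" using g by (simp add: mult_less_0_iff)
    ultimately show ?thesis using abs_square_less_1[of "norm (of_real (1 - \<gamma>) * z + of_real \<gamma>)"] by (simp only: abs_norm_cancel) linarith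
  qed
  also have "\<dots> \<longleftrightarrow> (norm z)\<^sup>2 < (norm (1 + of_real \<gamma> - of_real \<gamma> * z))\<^sup>2"
  proof -
    have "(norm (1 + of_real \<gamma> - of_real \<gamma> * z))\<^sup>2 - (norm z)\<^sup>2 = (1 + \<gamma>) * (- E)"
      unfolding cmod_power2 by (simp add: E_def power2_eq_square algebra_simps)
    moreover have "E < 0 \<longleftrightarrow> 0 < (1 + \<gamma>) * (- E)" using g by (simp add: zero_less_mult_iff mult_less_0_iff)
    ultimately show ?thesis by linarith
  qed
  also have "\<dots> \<longleftrightarrow> norm z < norm (1 + of_real \<gamma> - of_real \<gamma> * z)"
    by (meson norm_ge_zero power2_less_imp_less power_strict_mono zero_less_numeral)
  finally show ?thesis .
qed

lemma norm_1_plus_of_real: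
  assumes "0 \<le> \<gamma>"
  shows "norm (1 + complex_of_real \<gamma>) = 1 + \<gamma>"
  using norm_of_real[of "1 + \<gamma>"] assms by simp

lemma one_plus_of_real_nonzero: "0 \<le> \<gamma> \<Longrightarrow> 1 + complex_of_real \<gamma> \<noteq> 0"
  using norm_1_plus_of_real by force

lemma ball_subset_Omega:
  assumes g: "0 \<le> \<gamma>" "\<gamma> < 1"
  shows "ball 0 1 \<subseteq> Omega \<gamma>"
proof
  fix z :: complex assume "z \<in> ball 0 1"
  hence "norm z < 1" by simp
  moreover have "\<gamma> * norm z \<le> \<gamma>" using \<open>norm z < 1\<close> g by (simp add: mult_left_le)
  ultimately have "norm z < (1 + \<gamma>) - \<gamma> * norm z" by linarith
  also have "\<dots> \<le> norm (1 + of_real \<gamma> - of_real \<gamma> * z)"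
    using norm_triangle_ineq2[of "1 + of_real \<gamma>" "of_real \<gamma> * z"] g
    by (simp add: norm_1_plus_of_real norm_mult)
  finally show "z \<in> Omega \<gamma>" using mem_Omega_iff[OF g] by blast
qed

lemma Omega_to_disk_denominator_nonzero:
  assumes g: "0 \<le> \<gamma>" "\<gamma> < 1" and z: "z \<in> Omega \<gamma>"
  shows "1 + of_real \<gamma> - of_real \<gamma> * z \<noteq> 0"
  using mem_Omega_iff[OF g] z by force

lemma norm_Omega_to_disk_lt_1:
  assumes g: "0 \<le> \<gamma>" "\<gamma> < 1" and z: "z \<in> Omega \<gamma>"
  shows "norm (Omega_to_disk \<gamma> z) < 1"
  using mem_Omega_iff[OF g] z Omega_to_disk_denominator_nonzero[OF g z]
  by (simp add: Omega_to_disk_def norm_divide divide_less_eq)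

lemma Omega_to_disk_holomorphic:
  assumes g: "0 \<le> \<gamma>" "\<gamma> < 1"
  shows "Omega_to_disk \<gamma> holomorphic_on Omega \<gamma>"
  unfolding Omega_to_disk_def[abs_def]
  by (intro holomorphic_intros) (use Omega_to_disk_denominator_nonzero[OF g] in auto)

lemma disk_to_Omega_denominator_nonzero:
  fixes u :: complex
  assumes g: "0 \<le> \<gamma>" "\<gamma> < 1" and u: "norm u < 1"
  shows "1 + of_real \<gamma> * u \<noteq> 0"
proof
  assume "1 + of_real \<gamma> * u = 0"
  hence "norm (of_real \<gamma> * u) = 1" by (metis add_eq_0_iff norm_minus_cancel norm_one)
  moreover have "norm (of_real \<gamma> * u) < 1"
    using g u mult_left_le[of "norm u" \<gamma>] by (simp add: norm_mult)
  ultimately show False by simp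
qed

lemma disk_to_Omega_in_Omega:
  fixes u :: complex
  assumes g: "0 \<le> \<gamma>" "\<gamma> < 1" and u: "norm u < 1"
  shows "disk_to_Omega \<gamma> u \<in> Omega \<gamma>"
proof -
  note d = disk_to_Omega_denominator_nonzero[OF g u]
  note g1 = norm_1_plus_of_real[OF g(1)]
  have "1 + of_real \<gamma> - of_real \<gamma> * disk_to_Omega \<gamma> u = (1 + of_real \<gamma>) / (1 + of_real \<gamma> * u)"
    using d by (simp add: disk_to_Omega_def field_simps)
  moreover have "norm (disk_to_Omega \<gamma> u) < (1 + \<gamma>) / norm (1 + of_real \<gamma> * u)"
    using u g d by (simp add: disk_to_Omega_def norm_divide norm_mult g1 divide_strict_right_mono)
  ultimately show ?thesis
    using mem_Omega_iff[OF g] by (simp add: norm_divide g1)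
qed

lemma disk_to_Omega_holomorphic:
  assumes g: "0 \<le> \<gamma>" "\<gamma> < 1"
  shows "disk_to_Omega \<gamma> holomorphic_on ball 0 1"
  unfolding disk_to_Omega_def[abs_def]
  by (intro holomorphic_intros) (use disk_to_Omega_denominator_nonzero[OF g] in auto)

lemma disk_to_Omega_Omega_to_disk:
  assumes g: "0 \<le> \<gamma>" "\<gamma> < 1" and z: "z \<in> Omega \<gamma>"
  shows "disk_to_Omega \<gamma> (Omega_to_disk \<gamma> z) = z"
proof -
  define A where "A = 1 + of_real \<gamma> - of_real \<gamma> * z"
  have A: "A \<noteq> 0" using Omega_to_disk_denominator_nonzero[OF g z] by (simp add: A_def)
  note g1 = one_plus_of_real_nonzero[OF g(1)]
  have "1 + of_real \<gamma> * (z / A) = (1 + of_real \<gamma>) / A"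
    using A by (simp add: A_def field_simps)
  thus ?thesis using A g1 by (simp add: disk_to_Omega_def Omega_to_disk_def A_def[symmetric])
qed

definition Omega_to_disk_fps :: "real \<Rightarrow> complex fps" where
  "Omega_to_disk_fps \<gamma> = Abs_fps (\<lambda>n. if n = 0 then 0 else of_real (\<gamma> ^ (n - 1) / (1 + \<gamma>) ^ n))"

lemma has_fps_expansion_Omega_to_disk:
  assumes g: "0 \<le> \<gamma>" "\<gamma> < 1"
  shows "Omega_to_disk \<gamma> has_fps_expansion Omega_to_disk_fps \<gamma>"
proof (rule has_fps_expansionI)
  have "(\<lambda>n. fps_nth (Omega_to_disk_fps \<gamma>) n * z ^ n) sums Omega_to_disk \<gamma> z"
    if z: "norm z < 1" for z
  proof -
    define q where "q = of_real \<gamma> * z / (1 + of_real \<gamma>)"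
    have "norm q \<le> \<gamma> / (1 + \<gamma>)"
      using g z by (simp add: q_def norm_mult norm_divide norm_1_plus_of_real divide_right_mono
          mult_left_le)
    also have "\<dots> < 1" using g by simp
    finally have "(\<lambda>n. z / (1 + of_real \<gamma>) * q ^ n) sums (z / (1 + of_real \<gamma>) * (1 / (1 - q)))"
      by (intro sums_mult geometric_sums)
    moreover have "z / (1 + of_real \<gamma>) * (1 / (1 - q)) = Omega_to_disk \<gamma> z"
    proof -
      note g1 = one_plus_of_real_nonzero[OF g(1)]
      have "1 - q = (1 + of_real \<gamma> - of_real \<gamma> * z) / (1 + of_real \<gamma>)"
        using g1 by (simp add: q_def field_simps)
      thus ?thesis
        using g1 Omega_to_disk_denominator_nonzero[OF g, of z] ball_subset_Omega[OF g] z
        by (auto simp: Omega_to_disk_def)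
    qed
    moreover have "fps_nth (Omega_to_disk_fps \<gamma>) (Suc n) * z ^ Suc n = z / (1 + of_real \<gamma>) * q ^ n" for n
      by (simp add: Omega_to_disk_fps_def q_def field_simps)
    ultimately have "(\<lambda>n. fps_nth (Omega_to_disk_fps \<gamma>) (Suc n) * z ^ Suc n) sums Omega_to_disk \<gamma> z"
      by simp
    from sums_Suc[OF this] show ?thesis by (simp add: Omega_to_disk_fps_def)
  qed
  moreover have "eventually (\<lambda>z. z \<in> ball (0::complex) 1) (nhds 0)"
    by (rule eventually_nhds_in_open) auto
  ultimately show "\<forall>\<^sub>F z in nhds 0. (\<lambda>n. fps_nth (Omega_to_disk_fps \<gamma>) n * z ^ n) sums Omega_to_disk \<gamma> z"
    by (auto elim: eventually_mono)
qed

lemma Omega_to_disk_fps_power_coeff_nonneg: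
  assumes "0 \<le> \<gamma>"
  shows "Im (fps_nth (Omega_to_disk_fps \<gamma> ^ i) n) = 0 \<and> Re (fps_nth (Omega_to_disk_fps \<gamma> ^ i) n) \<ge> 0"
proof (induction i arbitrary: n)
  case (Suc i)
  have "Im (fps_nth (Omega_to_disk_fps \<gamma>) j) = 0 \<and> Re (fps_nth (Omega_to_disk_fps \<gamma>) j) \<ge> 0" for j
    using assms by (simp add: Omega_to_disk_fps_def)
  with Suc.IH show ?case
    by (auto simp: fps_mult_nth intro!: sum_nonneg)
qed simp

lemma one_div_one_minus_Omega_to_disk:
  assumes g: "0 \<le> \<gamma>" "\<gamma> < 1" and z: "norm z < 1"
  shows "1 / (1 - Omega_to_disk \<gamma> z) = 1 + z / ((1 + of_real \<gamma>) * (1 - z))"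
proof -
  define A where "A = 1 + of_real \<gamma> - of_real \<gamma> * z"
  define D where "D = (1 + of_real \<gamma>) * (1 - z)"
  have A: "A \<noteq> 0" and D: "D \<noteq> 0"
    using Omega_to_disk_denominator_nonzero[OF g, of z] ball_subset_Omega[OF g] z
      one_plus_of_real_nonzero[OF g(1)] by (auto simp: A_def D_def)
  have "1 - Omega_to_disk \<gamma> z = (A - z) / A"
    using A by (simp add: Omega_to_disk_def A_def diff_divide_distrib)
  also have "A - z = D" by (simp add: A_def D_def algebra_simps)
  finally have "1 / (1 - Omega_to_disk \<gamma> z) = A / D" by simp
  also have "A = D + z" by (simp add: A_def D_def algebra_simps)
  finally show ?thesis using D by (simp add: D_def add_divide_distrib)
qed

lemma fps_nth_0_Omega_to_disk_fps: "fps_nth (Omega_to_disk_fps \<gamma>) 0 = 0"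
  by (simp add: Omega_to_disk_fps_def)

lemma sum_Omega_to_disk_fps_power_coeffs:
  assumes g: "0 \<le> \<gamma>" "\<gamma> < 1" and n: "n \<ge> 1"
  shows "(\<Sum>i=0..n. fps_nth (Omega_to_disk_fps \<gamma> ^ i) n) = of_real (1 / (1 + \<gamma>))"
proof -
  \<comment> \<open>the sum is the n-th coefficient of the composition of the geometric series with Omega_to_disk\<close>
  define Geo :: "complex fps" where "Geo = Abs_fps (\<lambda>_. 1)"
  define W :: "complex fps" where "W = Abs_fps (\<lambda>n. if n = 0 then 1 else of_real (1 / (1 + \<gamma>)))"
  have near0: "eventually (\<lambda>z. z \<in> ball (0::complex) 1) (nhds 0)"
    by (rule eventually_nhds_in_open) auto
  have "(\<lambda>u::complex. 1 / (1 - u)) has_fps_expansion Geo"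
    by (rule has_fps_expansionI, use near0 in eventually_elim)
       (auto simp: Geo_def intro: geometric_sums)
  hence "((\<lambda>u. 1 / (1 - u)) \<circ> Omega_to_disk \<gamma>) has_fps_expansion fps_compose Geo (Omega_to_disk_fps \<gamma>)"
    by (rule has_fps_expansion_compose[OF _ has_fps_expansion_Omega_to_disk[OF g] fps_nth_0_Omega_to_disk_fps])
  moreover have "\<forall>\<^sub>F z in nhds 0. ((\<lambda>u. 1 / (1 - u)) \<circ> Omega_to_disk \<gamma>) z
      = 1 + z / ((1 + of_real \<gamma>) * (1 - z))"
    using near0 by eventually_elim (simp add: one_div_one_minus_Omega_to_disk[OF g])
  moreover have W: "(\<lambda>z. 1 + z / ((1 + of_real \<gamma>) * (1 - z))) has_fps_expansion W"
  proof (rule has_fps_expansionI, use near0 in eventually_elim)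
    case (elim z)
    hence "(\<lambda>n. z / (1 + of_real \<gamma>) * z ^ n) sums (z / (1 + of_real \<gamma>) * (1 / (1 - z)))"
      by (intro sums_mult geometric_sums) simp
    hence "(\<lambda>n. fps_nth W (Suc n) * z ^ Suc n) sums (z / ((1 + of_real \<gamma>) * (1 - z)))"
      by (simp add: W_def)
    from sums_Suc[OF this] show ?case by (simp add: W_def add.commute)
  qed
  ultimately have "fps_compose Geo (Omega_to_disk_fps \<gamma>) = W"
    using has_fps_expansion_cong[OF _ refl] fps_expansion_unique_complex[OF _ W] by metis
  hence "fps_nth (fps_compose Geo (Omega_to_disk_fps \<gamma>)) n = fps_nth W n" by simp
  thus ?thesis using n by (simp add: fps_compose_nth Geo_def W_def)
qed

lemma holomorphic_on_compose_disk_to_Omega: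
  assumes g: "0 \<le> \<gamma>" "\<gamma> < 1" and hol: "h holomorphic_on Omega \<gamma>"
  shows "(h \<circ> disk_to_Omega \<gamma>) holomorphic_on ball 0 1"
  using disk_to_Omega_in_Omega[OF g]
  by (intro holomorphic_on_compose_gen[OF disk_to_Omega_holomorphic[OF g] hol]) auto

lemma has_fps_expansion_via_disk:
  assumes g: "0 \<le> \<gamma>" "\<gamma> < 1" and hol: "h holomorphic_on Omega \<gamma>"
  shows "h has_fps_expansion
           fps_compose (fps_expansion (h \<circ> disk_to_Omega \<gamma>) 0) (Omega_to_disk_fps \<gamma>)"
proof -
  define F where "F = h \<circ> disk_to_Omega \<gamma>"
  have "F analytic_on {0}"
    using holomorphic_on_compose_disk_to_Omega[OF g hol] analytic_on_open[of "ball 0 1" F]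
      analytic_on_subset by (auto simp: F_def)
  hence exp: "(F \<circ> Omega_to_disk \<gamma>) has_fps_expansion fps_compose (fps_expansion F 0) (Omega_to_disk_fps \<gamma>)"
    by (intro has_fps_expansion_compose analytic_at_imp_has_fps_expansion_0
          has_fps_expansion_Omega_to_disk g) (simp_all add: fps_nth_0_Omega_to_disk_fps)
  have "eventually (\<lambda>z. z \<in> ball (0::complex) 1) (nhds 0)"
    by (rule eventually_nhds_in_open) auto
  hence ev: "eventually (\<lambda>z. (F \<circ> Omega_to_disk \<gamma>) z = h z) (nhds 0)"
    by (rule eventually_mono)
       (use ball_subset_Omega[OF g] in \<open>auto simp: F_def disk_to_Omega_Omega_to_disk[OF g]\<close>)
  show ?thesis
    using exp has_fps_expansion_cong[OF ev refl] by (simp add: F_def o_def)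
qed

lemma Taylor_coeff_bound_Omega:
  fixes h :: "complex \<Rightarrow> complex"
  assumes g: "0 \<le> \<gamma>" "\<gamma> < 1" and hol: "h holomorphic_on Omega \<gamma>"
    and bd: "\<And>z. z \<in> Omega \<gamma> \<Longrightarrow> norm (h z) \<le> 1" and n: "n \<ge> 1"
  shows "norm ((deriv ^^ n) h 0 / fact n) \<le> (1 - (norm (h 0))\<^sup>2) / (1 + \<gamma>)"
proof -
  define F where "F = h \<circ> disk_to_Omega \<gamma>"
  define C where "C = fps_expansion F 0"
  define P where "P = (\<lambda>i. fps_nth (Omega_to_disk_fps \<gamma> ^ i) n)"
  have "F holomorphic_on ball 0 1"
    unfolding F_def by (rule holomorphic_on_compose_disk_to_Omega[OF g hol])
  moreover have "norm (F w) \<le> 1" if "norm w < 1" for w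
    using bd[OF disk_to_Omega_in_Omega[OF g that]] by (simp add: F_def)
  moreover have "F 0 = h 0" by (simp add: F_def disk_to_Omega_def)
  ultimately have C: "norm (fps_nth C i) \<le> 1 - (norm (h 0))\<^sup>2" if "i \<ge> 1" for i
    using Wiener_coefficient_bound[of F i] that by (simp add: C_def fps_expansion_def)
  have P: "norm (P i) = Re (P i)" "Re (P i) \<ge> 0" for i
    using Omega_to_disk_fps_power_coeff_nonneg[OF g(1), of i n] by (simp_all add: P_def cmod_eq_Re)
  have "(deriv ^^ n) h 0 / fact n = (\<Sum>i=0..n. fps_nth C i * P i)"
    using fps_nth_fps_expansion[OF has_fps_expansion_via_disk[OF g hol]]
    by (simp add: C_def F_def P_def fps_compose_nth)
  also have "\<dots> = (\<Sum>i=1..n. fps_nth C i * P i)"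
    using n by (simp add: P_def sum.atLeast_Suc_atMost)
  finally have "norm ((deriv ^^ n) h 0 / fact n) \<le> (\<Sum>i=1..n. norm (fps_nth C i) * Re (P i))"
    using norm_sum[of "\<lambda>i. fps_nth C i * P i" "{1..n}"] by (simp add: norm_mult P(1))
  also have "\<dots> \<le> (\<Sum>i=1..n. (1 - (norm (h 0))\<^sup>2) * Re (P i))"
    using C P(2) by (intro sum_mono mult_right_mono) auto
  also have "\<dots> = (1 - (norm (h 0))\<^sup>2) * Re (\<Sum>i=1..n. P i)"
    by (simp add: sum_distrib_left)
  also have "(\<Sum>i=1..n. P i) = (\<Sum>i=0..n. P i)"
    using n by (simp add: P_def sum.atLeast_Suc_atMost)
  also have "(\<Sum>i=0..n. P i) = of_real (1 / (1 + \<gamma>))"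
    unfolding P_def by (rule sum_Omega_to_disk_fps_power_coeffs[OF g n])
  finally show ?thesis by simp
qed

section \<open>Parseval's identity and comparison of derivatives\<close>

lemma has_integral_suminf_Weierstrass:
  fixes T :: "nat \<Rightarrow> real \<Rightarrow> 'a::banach"
  assumes cont: "\<And>n. continuous_on {a..b} (T n)" and int: "\<And>n. (T n has_integral I n) {a..b}"
    and bound: "\<And>n t. t \<in> {a..b} \<Longrightarrow> norm (T n t) \<le> M n" and M: "summable M"
  shows "summable I" and "((\<lambda>t. \<Sum>n. T n t) has_integral (\<Sum>n. I n)) {a..b}"
proof -
  have "uniform_limit {a..b} (\<lambda>N t. \<Sum>n<N. T n t) (\<lambda>t. \<Sum>n. T n t) sequentially"
    by (rule Weierstrass_m_test[OF bound M])
  then obtain I' J where I': "\<And>N. ((\<lambda>t. \<Sum>n<N. T n t) has_integral I' N) {a..b}"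
    and J: "((\<lambda>t. \<Sum>n. T n t) has_integral J) {a..b}" and lim: "I' \<longlonglongrightarrow> J"
    by (rule uniform_limit_integral) (auto intro!: continuous_on_sum cont)
  have "I' = (\<lambda>N. \<Sum>n<N. I n)"
    using has_integral_unique[OF I' has_integral_sum[OF _ int]] by auto
  with lim have "I sums J" by (simp add: sums_def)
  with J show "summable I" "((\<lambda>t. \<Sum>n. T n t) has_integral (\<Sum>n. I n)) {a..b}"
    by (simp_all add: sums_iff)
qed

lemma circlepath_Fourier_coefficient:
  fixes f :: "complex \<Rightarrow> complex"
  assumes hol: "f holomorphic_on ball 0 1" and r: "0 < \<rho>" "\<rho> < 1"
  shows "((\<lambda>t. f (circlepath 0 \<rho> t) / (circlepath 0 \<rho> t) ^ n)
           has_integral ((deriv ^^ n) f 0 / fact n)) {0..1}"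
proof -
  have "continuous_on (cball 0 \<rho>) f"
    by (rule continuous_on_subset[OF holomorphic_on_imp_continuous_on[OF hol]]) (use r in auto)
  moreover have "f holomorphic_on ball 0 \<rho>" by (rule holomorphic_on_subset[OF hol]) (use r in auto)
  ultimately have "((\<lambda>u. f u / (u - 0) ^ Suc n) has_contour_integral
      (2 * pi * \<i> / fact n * (deriv ^^ n) f 0)) (circlepath 0 \<rho>)"
    by (rule Cauchy_has_contour_integral_higher_derivative_circlepath) (use r in simp)
  hence "((\<lambda>t. f (circlepath 0 \<rho> t) / (circlepath 0 \<rho> t) ^ Suc n
            * vector_derivative (circlepath 0 \<rho>) (at t within {0..1}))
          has_integral ((2 * pi * \<i>) * ((deriv ^^ n) f 0 / fact n))) {0..1}"
    by (simp add: has_contour_integral_def)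
  hence "((\<lambda>t. (2 * pi * \<i>) * (f (circlepath 0 \<rho> t) / (circlepath 0 \<rho> t) ^ n))
          has_integral ((2 * pi * \<i>) * ((deriv ^^ n) f 0 / fact n))) {0..1}"
  proof (rule has_integral_eq[rotated])
    fix t :: real assume "t \<in> {0..1}"
    hence "vector_derivative (circlepath 0 \<rho>) (at t within {0..1}) = 2 * pi * \<i> * circlepath 0 \<rho> t"
      using vector_derivative_circlepath01[of t 0 \<rho>] by (simp add: circlepath mult_ac)
    moreover have "circlepath 0 \<rho> t \<noteq> 0" using r by (simp add: circlepath)
    ultimately show "f (circlepath 0 \<rho> t) / (circlepath 0 \<rho> t) ^ Suc n
        * vector_derivative (circlepath 0 \<rho>) (at t within {0..1})
        = (2 * pi * \<i>) * (f (circlepath 0 \<rho> t) / (circlepath 0 \<rho> t) ^ n)"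
      by (simp add: field_simps)
  qed
  thus ?thesis by (subst (asm) has_integral_mult_right_iff) auto
qed

lemma circlepath_integral_conj_power_mult:
  fixes f :: "complex \<Rightarrow> complex"
  assumes hol: "f holomorphic_on ball 0 1" and r: "0 < \<rho>" "\<rho> < 1"
  shows "((\<lambda>t. cnj (circlepath 0 \<rho> t) ^ n * f (circlepath 0 \<rho> t))
           has_integral of_real (\<rho> ^ (2 * n)) * ((deriv ^^ n) f 0 / fact n)) {0..1}"
proof -
  have "cnj (circlepath 0 \<rho> t) ^ n = of_real (\<rho> ^ (2 * n)) / circlepath 0 \<rho> t ^ n" for t
  proof -
    have np: "norm (circlepath 0 \<rho> t) = \<rho>" using r by (simp add: circlepath norm_mult)
    hence "cnj (circlepath 0 \<rho> t) * circlepath 0 \<rho> t = of_real (\<rho>\<^sup>2)"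
      using complex_norm_square[of "circlepath 0 \<rho> t"] by (simp add: mult.commute)
    hence "cnj (circlepath 0 \<rho> t) ^ n * circlepath 0 \<rho> t ^ n = of_real (\<rho> ^ (2 * n))"
      by (simp add: power_mult_distrib[symmetric] power_mult)
    moreover have "circlepath 0 \<rho> t \<noteq> 0" using np r by auto
    ultimately show ?thesis by (simp add: eq_divide_eq)
  qed
  hence "(\<lambda>t. cnj (circlepath 0 \<rho> t) ^ n * f (circlepath 0 \<rho> t))
      = (\<lambda>t. of_real (\<rho> ^ (2 * n)) * (f (circlepath 0 \<rho> t) / circlepath 0 \<rho> t ^ n))"
    by (simp add: fun_eq_iff)
  thus ?thesis
    using has_integral_mult_right[OF circlepath_Fourier_coefficient[OF hol r]] by simp
qed

lemma sums_norm_square_Taylor: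
  fixes f :: "complex \<Rightarrow> complex"
  assumes hol: "f holomorphic_on ball 0 1" and z: "norm z < 1"
  defines "c \<equiv> \<lambda>n. (deriv ^^ n) f 0 / fact n"
  shows "(\<lambda>n. cnj (c n) * cnj z ^ n * f z) sums of_real ((norm (f z))\<^sup>2)"
proof -
  have "(\<lambda>n. c n * z ^ n) sums f z"
    using holomorphic_power_series[OF hol, of z] z by (simp add: c_def)
  hence "(\<lambda>n. cnj (c n * z ^ n)) sums cnj (f z)"
    by (rule sums_cnj[THEN iffD2])
  hence "(\<lambda>n. cnj (c n * z ^ n) * f z) sums (cnj (f z) * f z)"
    by (rule sums_mult2)
  thus ?thesis using complex_norm_square[of "f z"] by (simp add: mult.commute)
qed

lemma summable_norm_Taylor_coeffs:
  fixes f :: "complex \<Rightarrow> complex"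
  assumes hol: "f holomorphic_on ball 0 1" and r: "0 \<le> \<rho>" "\<rho> < 1"
  shows "summable (\<lambda>n. norm ((deriv ^^ n) f 0 / fact n) * \<rho> ^ n)"
proof -
  define x where "x = (1 + \<rho>) / 2"
  have "summable (\<lambda>n. (deriv ^^ n) f 0 / fact n * of_real x ^ n)"
    using holomorphic_power_series[OF hol, of "of_real x"] r norm_1_plus_of_real[of \<rho>]
    by (simp add: x_def sums_iff)
  hence "summable (\<lambda>n. norm ((deriv ^^ n) f 0 / fact n * of_real \<rho> ^ n))"
    by (rule powser_insidea) (use r norm_1_plus_of_real[of \<rho>] in \<open>simp add: x_def\<close>)
  thus ?thesis using r by (simp only: norm_mult norm_power norm_of_real abs_of_nonneg)
qed

lemma Parseval_circlepath:
  fixes f :: "complex \<Rightarrow> complex"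
  assumes hol: "f holomorphic_on ball 0 1" and r: "0 < \<rho>" "\<rho> < 1"
  defines "c \<equiv> \<lambda>n. (deriv ^^ n) f 0 / fact n"
  shows "summable (\<lambda>n. (norm (c n))\<^sup>2 * \<rho> ^ (2 * n))"
    and "((\<lambda>t. (norm (f (circlepath 0 \<rho> t)))\<^sup>2) has_integral (\<Sum>n. (norm (c n))\<^sup>2 * \<rho> ^ (2 * n))) {0..1}"
proof -
  define p where "p = circlepath 0 \<rho>"
  have np: "norm (p t) = \<rho>" for t using r by (simp add: p_def circlepath norm_mult)
  hence pin: "p t \<in> ball 0 1" for t using r by simp
  define T where "T = (\<lambda>n t. cnj (c n) * cnj (p t) ^ n * f (p t))"
  have Tint: "(T n has_integral of_real ((norm (c n))\<^sup>2 * \<rho> ^ (2 * n))) {0..1}" for n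
  proof -
    have "(T n has_integral cnj (c n) * (of_real (\<rho> ^ (2 * n)) * c n)) {0..1}"
      unfolding T_def mult.assoc p_def c_def
      by (rule has_integral_mult_right[OF circlepath_integral_conj_power_mult[OF hol r]])
    moreover have "cnj (c n) * (of_real (\<rho> ^ (2 * n)) * c n) = of_real ((norm (c n))\<^sup>2 * \<rho> ^ (2 * n))"
      using complex_norm_square[of "c n"] by (simp add: mult_ac)
    ultimately show ?thesis by (simp only:)
  qed
  have cont_p: "continuous_on {0..1} p" using path_circlepath by (simp add: p_def path_def)
  moreover have "continuous_on (p ` {0..1}) f"
    using holomorphic_on_imp_continuous_on[OF hol] continuous_on_subset pin by blast
  ultimately have cont_fp: "continuous_on {0..1} (\<lambda>t. f (p t))"
    using continuous_on_compose2 by blast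
  have "bounded ((\<lambda>t. f (p t)) ` {0..1})"
    by (rule compact_imp_bounded[OF compact_continuous_image[OF cont_fp compact_Icc]])
  then obtain B where "\<forall>y\<in>(\<lambda>t. f (p t)) ` {0..1}. norm y \<le> B" unfolding bounded_iff by blast
  hence B: "norm (f (p t)) \<le> B" if "t \<in> {0..1}" for t using that by blast
  have bound: "norm (T n t) \<le> norm (c n) * \<rho> ^ n * B" if "t \<in> {0..1}" for n t
    using B[OF that] r by (simp add: T_def norm_mult norm_power np mult_left_mono)
  have M: "summable (\<lambda>n. norm (c n) * \<rho> ^ n * B)"
    using summable_mult2[OF summable_norm_Taylor_coeffs[OF hol less_imp_le[OF r(1)] r(2)]]
    by (simp add: c_def)
  have cont: "continuous_on {0..1} (T n)" for n
    unfolding T_def by (intro continuous_intros cont_p cont_fp)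
  note Weierstrass = has_integral_suminf_Weierstrass[OF cont Tint bound M]
  have sm: "summable (\<lambda>n. of_real ((norm (c n))\<^sup>2 * \<rho> ^ (2 * n)) :: complex)"
    and int: "((\<lambda>t. \<Sum>n. T n t) has_integral (\<Sum>n. of_real ((norm (c n))\<^sup>2 * \<rho> ^ (2 * n)))) {0..1}"
    using Weierstrass by simp_all
  show sm': "summable (\<lambda>n. (norm (c n))\<^sup>2 * \<rho> ^ (2 * n))"
    using sm by (simp only: summable_of_real_iff)
  have "(\<lambda>t. \<Sum>n. T n t) = (\<lambda>t. of_real ((norm (f (p t)))\<^sup>2))"
    using sums_norm_square_Taylor[OF hol] np r by (simp add: T_def c_def sums_iff fun_eq_iff)
  moreover have "of_real (\<Sum>n. (norm (c n))\<^sup>2 * \<rho> ^ (2 * n))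
      = (\<Sum>n. of_real ((norm (c n))\<^sup>2 * \<rho> ^ (2 * n)) :: complex)"
    by (rule suminf_of_real[OF sm'])
  ultimately have "((\<lambda>t. of_real ((norm (f (p t)))\<^sup>2) :: complex)
      has_integral of_real (\<Sum>n. (norm (c n))\<^sup>2 * \<rho> ^ (2 * n))) {0..1}"
    using int by (simp only:)
  from has_integral_Re[OF this]
  show "((\<lambda>t. (norm (f (circlepath 0 \<rho> t)))\<^sup>2) has_integral (\<Sum>n. (norm (c n))\<^sup>2 * \<rho> ^ (2 * n))) {0..1}"
    by (simp add: p_def)
qed

lemma powser_nonneg_if_linear_weighted_nonneg:
  fixes u :: "nat \<Rightarrow> real"
  assumes sm: "\<And>y. 0 \<le> y \<Longrightarrow> y < 1 \<Longrightarrow> summable (\<lambda>n. u n * y ^ n)"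
    and nn: "\<And>y. 0 \<le> y \<Longrightarrow> y < 1 \<Longrightarrow> 0 \<le> (\<Sum>n. (real n + 1) * u n * y ^ n)"
    and x: "0 \<le> x" "x < 1"
  shows "0 \<le> (\<Sum>n. u n * x ^ n)"
proof (cases "x = 0")
  case True
  thus ?thesis using nn[of 0] by simp
next
  case False
  \<comment> \<open>E y = y * (\<Sum>n. u n * y ^ n) vanishes at 0 and is nondecreasing on [0, 1)\<close>
  define e where "e = (\<lambda>n. if n = 0 then 0 else u (n - 1))"
  define E where "E = (\<lambda>y::real. \<Sum>n. e n * y ^ n)"
  have Esums: "(\<lambda>n. e n * y ^ n) sums (y * (\<Sum>n. u n * y ^ n))" if "0 \<le> y" "y < 1" for y
  proof -
    have "(\<lambda>n. y * (u n * y ^ n)) sums (y * (\<Sum>n. u n * y ^ n))"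
      using sm[OF that] by (intro sums_mult summable_sums)
    hence "(\<lambda>n. e (Suc n) * y ^ Suc n) sums (y * (\<Sum>n. u n * y ^ n))" by (simp add: e_def mult_ac)
    from sums_Suc[OF this] show ?thesis by (simp add: e_def)
  qed
  have "DERIV E y :> (\<Sum>n. (real n + 1) * u n * y ^ n)" if "0 \<le> y" "y < 1" for y
  proof -
    have "summable (\<lambda>n. e n * ((1 + y) / 2) ^ n)"
      using Esums[of "(1 + y) / 2"] that by (simp add: sums_iff)
    hence "DERIV E y :> (\<Sum>n. diffs e n * y ^ n)"
      unfolding E_def by (rule termdiffs_strong) (use that in auto)
    thus ?thesis by (simp add: diffs_def e_def add.commute)
  qed
  hence "E 0 \<le> E x"
    by (intro DERIV_nonneg_imp_nondecreasing[OF x(1)]) (use nn x in force)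
  moreover have "E 0 = 0" by (simp add: E_def e_def)
  moreover have "E x = x * (\<Sum>n. u n * x ^ n)" using Esums[OF x] by (simp add: E_def sums_iff)
  ultimately show ?thesis using False x by (simp add: zero_le_mult_iff)
qed

lemma powser_nonneg_if_square_weighted_nonneg:
  fixes u :: "nat \<Rightarrow> real"
  assumes sm: "\<And>y. 0 \<le> y \<Longrightarrow> y < 1 \<Longrightarrow> summable (\<lambda>n. (real n + 1)\<^sup>2 * \<bar>u n\<bar> * y ^ n)"
    and nn: "\<And>y. 0 \<le> y \<Longrightarrow> y < 1 \<Longrightarrow> 0 \<le> (\<Sum>n. (real n + 1)\<^sup>2 * u n * y ^ n)"
    and x: "0 \<le> x" "x < 1"
  shows "0 \<le> (\<Sum>n. u n * x ^ n)"
proof -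
  have smj: "summable (\<lambda>n. (real n + 1) ^ j * u n * y ^ n)" if "j \<le> 2" "0 \<le> y" "y < 1" for j y
  proof (rule summable_comparison_test[OF _ sm[OF that(2,3)]], intro exI allI impI)
    fix n
    have "(real n + 1) ^ j \<le> (real n + 1)\<^sup>2" by (rule power_increasing) (use that in auto)
    thus "norm ((real n + 1) ^ j * u n * y ^ n) \<le> (real n + 1)\<^sup>2 * \<bar>u n\<bar> * y ^ n"
      using that by (simp add: abs_mult mult_right_mono)
  qed
  have "0 \<le> (\<Sum>n. ((real n + 1) * u n) * y ^ n)" if "0 \<le> y" "y < 1" for y
    using powser_nonneg_if_linear_weighted_nonneg[of "\<lambda>n. (real n + 1) * u n"] nn smj[of 1]
      that by (simp add: power2_eq_square mult_ac)
  thus ?thesis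
    using powser_nonneg_if_linear_weighted_nonneg[OF _ _ x] smj[of 0] by (simp add: mult_ac)
qed

lemma powser_le_if_square_weighted_le:
  fixes \<alpha> \<beta> :: "nat \<Rightarrow> real"
  assumes nonneg: "\<And>n. 0 \<le> \<alpha> n" "\<And>n. 0 \<le> \<beta> n" and c: "0 \<le> c"
    and sm: "\<And>y. 0 \<le> y \<Longrightarrow> y < 1 \<Longrightarrow> summable (\<lambda>n. (real n + 1)\<^sup>2 * \<alpha> n * y ^ n)"
      "\<And>y. 0 \<le> y \<Longrightarrow> y < 1 \<Longrightarrow> summable (\<lambda>n. (real n + 1)\<^sup>2 * \<beta> n * y ^ n)"
    and le: "\<And>y. 0 \<le> y \<Longrightarrow> y < 1 \<Longrightarrow>
      (\<Sum>n. (real n + 1)\<^sup>2 * \<beta> n * y ^ n) \<le> c * (\<Sum>n. (real n + 1)\<^sup>2 * \<alpha> n * y ^ n)"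
    and x: "0 \<le> x" "x < 1"
  shows "summable (\<lambda>n. \<alpha> n * x ^ n)" "summable (\<lambda>n. \<beta> n * x ^ n)"
    and "(\<Sum>n. \<beta> n * x ^ n) \<le> c * (\<Sum>n. \<alpha> n * x ^ n)"
proof -
  have weight: "\<gamma> n * y ^ n \<le> (real n + 1)\<^sup>2 * \<gamma> n * y ^ n" if "0 \<le> \<gamma> n" "0 \<le> y" for \<gamma> :: "nat \<Rightarrow> real" and n y
    using that mult_right_mono[of 1 "(real n + 1)\<^sup>2" "\<gamma> n * y ^ n"] by (simp add: mult_ac)
  show sa: "summable (\<lambda>n. \<alpha> n * x ^ n)"
    by (rule summable_comparison_test'[OF sm(1)[OF x]]) (use nonneg x weight in simp)
  show sb: "summable (\<lambda>n. \<beta> n * x ^ n)"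
    by (rule summable_comparison_test'[OF sm(2)[OF x]]) (use nonneg x weight in simp)
  define u where "u = (\<lambda>n. c * \<alpha> n - \<beta> n)"
  have "0 \<le> (\<Sum>n. u n * x ^ n)"
  proof (rule powser_nonneg_if_square_weighted_nonneg[OF _ _ x])
    fix y :: real assume y: "0 \<le> y" "y < 1"
    have "norm ((real n + 1)\<^sup>2 * \<bar>u n\<bar> * y ^ n)
        \<le> c * ((real n + 1)\<^sup>2 * \<alpha> n * y ^ n) + (real n + 1)\<^sup>2 * \<beta> n * y ^ n" for n
    proof -
      have "\<bar>u n\<bar> \<le> c * \<alpha> n + \<beta> n" using nonneg c by (simp add: u_def abs_le_iff)
      hence "\<bar>u n\<bar> * ((real n + 1)\<^sup>2 * y ^ n) \<le> (c * \<alpha> n + \<beta> n) * ((real n + 1)\<^sup>2 * y ^ n)"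
        using y by (intro mult_right_mono) auto
      thus ?thesis using y by (simp add: abs_mult algebra_simps)
    qed
    thus "summable (\<lambda>n. (real n + 1)\<^sup>2 * \<bar>u n\<bar> * y ^ n)"
      by (rule summable_comparison_test'[OF summable_add[OF summable_mult[OF sm(1)[OF y]] sm(2)[OF y]]])
    have "(\<Sum>n. (real n + 1)\<^sup>2 * u n * y ^ n)
        = c * (\<Sum>n. (real n + 1)\<^sup>2 * \<alpha> n * y ^ n) - (\<Sum>n. (real n + 1)\<^sup>2 * \<beta> n * y ^ n)"
      using suminf_diff[OF summable_mult[OF sm(1)[OF y], of c] sm(2)[OF y]]
        suminf_mult[OF sm(1)[OF y], of c] by (simp add: u_def algebra_simps)
    thus "0 \<le> (\<Sum>n. (real n + 1)\<^sup>2 * u n * y ^ n)" using le[OF y] by simp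
  qed
  moreover have "(\<Sum>n. u n * x ^ n) = c * (\<Sum>n. \<alpha> n * x ^ n) - (\<Sum>n. \<beta> n * x ^ n)"
    using suminf_diff[OF summable_mult[OF sa, of c] sb] suminf_mult[OF sa, of c]
    by (simp add: u_def algebra_simps)
  ultimately show "(\<Sum>n. \<beta> n * x ^ n) \<le> c * (\<Sum>n. \<alpha> n * x ^ n)" by simp
qed

lemma Taylor_coeff_deriv:
  "(deriv ^^ n) (deriv f) 0 / fact n = of_nat (Suc n) * ((deriv ^^ Suc n) f 0 / fact (Suc n))"
proof -
  have "(deriv ^^ Suc n) f = (deriv ^^ n) (deriv f)" by (simp only: funpow_Suc_right comp_def)
  moreover have "(fact (Suc n) :: complex) = of_nat (Suc n) * fact n" by simp
  ultimately show ?thesis by (simp add: field_simps del: of_nat_Suc)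
qed

lemma Parseval_circlepath_deriv:
  fixes f :: "complex \<Rightarrow> complex"
  assumes hol: "f holomorphic_on ball 0 1" and r: "0 < \<rho>" "\<rho> < 1"
  defines "\<alpha> \<equiv> \<lambda>n. (norm ((deriv ^^ Suc n) f 0 / fact (Suc n)))\<^sup>2"
  shows "summable (\<lambda>n. (real n + 1)\<^sup>2 * \<alpha> n * \<rho> ^ (2 * n))"
    and "((\<lambda>t. (norm (deriv f (circlepath 0 \<rho> t)))\<^sup>2)
          has_integral (\<Sum>n. (real n + 1)\<^sup>2 * \<alpha> n * \<rho> ^ (2 * n))) {0..1}"
proof -
  have "(norm ((deriv ^^ n) (deriv f) 0 / fact n))\<^sup>2 = (real n + 1)\<^sup>2 * \<alpha> n" for n
    unfolding Taylor_coeff_deriv \<alpha>_def norm_mult power_mult_distrib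
    by (metis norm_of_nat of_nat_Suc add.commute)
  moreover have "deriv f holomorphic_on ball 0 1" by (rule holomorphic_deriv[OF hol]) simp
  ultimately show "summable (\<lambda>n. (real n + 1)\<^sup>2 * \<alpha> n * \<rho> ^ (2 * n))"
    and "((\<lambda>t. (norm (deriv f (circlepath 0 \<rho> t)))\<^sup>2)
          has_integral (\<Sum>n. (real n + 1)\<^sup>2 * \<alpha> n * \<rho> ^ (2 * n))) {0..1}"
    using Parseval_circlepath[of "deriv f" \<rho>] r by simp_all
qed

lemma summable_weighted_Taylor_square:
  fixes f :: "complex \<Rightarrow> complex"
  assumes hol: "f holomorphic_on ball 0 1" and y: "0 \<le> y" "y < 1"
  shows "summable (\<lambda>n. (real n + 1)\<^sup>2 * (norm ((deriv ^^ Suc n) f 0 / fact (Suc n)))\<^sup>2 * y ^ n)"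
proof -
  define \<rho> where "\<rho> = sqrt ((1 + y) / 2)"
  have r: "0 < \<rho>" "\<rho> < 1" using y by (auto simp: \<rho>_def)
  have "y ^ n \<le> \<rho> ^ (2 * n)" for n using y by (simp add: \<rho>_def power_mult power_mono)
  thus ?thesis
    using y by (intro summable_comparison_test'[OF Parseval_circlepath_deriv(1)[OF hol r]])
      (simp add: abs_mult mult_left_mono)
qed

lemma Taylor_square_sum_le_of_deriv_le:
  fixes h g :: "complex \<Rightarrow> complex"
  assumes holh: "h holomorphic_on ball 0 1" and holg: "g holomorphic_on ball 0 1"
    and der: "\<And>z. z \<in> ball 0 1 \<Longrightarrow> norm (deriv g z) \<le> k * norm (deriv h z)"
    and x: "0 \<le> x" "x < 1"
  defines "\<alpha> \<equiv> \<lambda>n. (norm ((deriv ^^ Suc n) h 0 / fact (Suc n)))\<^sup>2"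
    and "\<beta> \<equiv> \<lambda>n. (norm ((deriv ^^ Suc n) g 0 / fact (Suc n)))\<^sup>2"
  shows "summable (\<lambda>n. \<alpha> n * x ^ n)" "summable (\<lambda>n. \<beta> n * x ^ n)"
    and "(\<Sum>n. \<beta> n * x ^ n) \<le> k\<^sup>2 * (\<Sum>n. \<alpha> n * x ^ n)"
proof -
  have sm: "summable (\<lambda>n. (real n + 1)\<^sup>2 * \<alpha> n * y ^ n)" "summable (\<lambda>n. (real n + 1)\<^sup>2 * \<beta> n * y ^ n)"
    if "0 \<le> y" "y < 1" for y
    unfolding \<alpha>_def \<beta>_def using summable_weighted_Taylor_square[OF holh that] summable_weighted_Taylor_square[OF holg that] .
  have le: "(\<Sum>n. (real n + 1)\<^sup>2 * \<beta> n * y ^ n) \<le> k\<^sup>2 * (\<Sum>n. (real n + 1)\<^sup>2 * \<alpha> n * y ^ n)"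
    if y: "0 \<le> y" "y < 1" for y
  proof (cases "y = 0")
    case True
    have "(norm (deriv g 0))\<^sup>2 \<le> (k * norm (deriv h 0))\<^sup>2" using der[of 0] by (intro power_mono) auto
    thus ?thesis using True by (simp add: \<alpha>_def \<beta>_def power_mult_distrib)
  next
    case False
    define \<rho> where "\<rho> = sqrt y"
    have r: "0 < \<rho>" "\<rho> < 1" using y False by (auto simp: \<rho>_def)
    have "(norm (deriv g (circlepath 0 \<rho> t)))\<^sup>2 \<le> k\<^sup>2 * (norm (deriv h (circlepath 0 \<rho> t)))\<^sup>2" for t
    proof -
      have "circlepath 0 \<rho> t \<in> ball 0 1" using r by (simp add: circlepath norm_mult)
      from power_mono[OF der[OF this], of 2] show ?thesis by (simp add: power_mult_distrib)
    qed
    hence "(\<Sum>n. (real n + 1)\<^sup>2 * \<beta> n * \<rho> ^ (2 * n)) \<le> k\<^sup>2 * (\<Sum>n. (real n + 1)\<^sup>2 * \<alpha> n * \<rho> ^ (2 * n))"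
      unfolding \<alpha>_def \<beta>_def
      by (rule has_integral_le[OF Parseval_circlepath_deriv(2)[OF holg r]
          has_integral_mult_right[OF Parseval_circlepath_deriv(2)[OF holh r]]])
    thus ?thesis using y by (simp add: \<rho>_def power_mult)
  qed
  have nonneg: "0 \<le> \<alpha> n" "0 \<le> \<beta> n" for n by (simp_all add: \<alpha>_def \<beta>_def)
  note powser_le_if_square_weighted_le[OF nonneg zero_le_power2 sm(1) sm(2) le x]
  thus "summable (\<lambda>n. \<alpha> n * x ^ n)" "summable (\<lambda>n. \<beta> n * x ^ n)"
    and "(\<Sum>n. \<beta> n * x ^ n) \<le> k\<^sup>2 * (\<Sum>n. \<alpha> n * x ^ n)" by simp_all
qed

section \<open>Bohr's inequality\<close>

lemma abs_le_AM_GM: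
  fixes x t :: real
  assumes "0 < t"
  shows "\<bar>x\<bar> \<le> x\<^sup>2 / (2 * t) + t / 2"
proof -
  have "2 * t * \<bar>x\<bar> \<le> x\<^sup>2 + t\<^sup>2"
    using zero_le_power2[of "\<bar>x\<bar> - t"] by (simp add: power2_eq_square algebra_simps)
  thus ?thesis using assms by (simp add: field_simps power2_eq_square)
qed

lemma weighted_sum_le_of_square_sum:
  fixes \<beta> :: "nat \<Rightarrow> real"
  assumes r: "0 < r" "r < 1" and M: "0 \<le> M"
    and sq: "summable (\<lambda>n. (\<beta> n)\<^sup>2 * r ^ n)" "(\<Sum>n. (\<beta> n)\<^sup>2 * r ^ n) \<le> M\<^sup>2 / (1 - r)"
  shows "summable (\<lambda>n. \<bar>\<beta> n\<bar> * r ^ Suc n)" and "(\<Sum>n. \<bar>\<beta> n\<bar> * r ^ Suc n) \<le> M * (r / (1 - r))"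
proof -
  define R where "R = r / (1 - r)"
  have R: "0 < R" using r by (simp add: R_def)
  have geo: "(\<lambda>n. r ^ Suc n) sums R"
    using sums_mult[OF geometric_sums[of r], of r] r by (simp add: R_def)
  \<comment> \<open>Cauchy-Schwarz through AM-GM with a free parameter t, optimal at t = M\<close>
  define U where "U = (\<lambda>t n. r / (2 * t) * ((\<beta> n)\<^sup>2 * r ^ n) + t / 2 * r ^ Suc n)"
  have amgm: "\<bar>\<beta> n\<bar> * r ^ Suc n \<le> U t n" if t: "0 < t" for t n
    using mult_right_mono[OF abs_le_AM_GM[OF t, of "\<beta> n"], of "r ^ Suc n"] r
    by (simp add: U_def algebra_simps)
  have U: "U t sums (r / (2 * t) * (\<Sum>n. (\<beta> n)\<^sup>2 * r ^ n) + t / 2 * R)" for t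
    unfolding U_def by (intro sums_add sums_mult summable_sums sq(1) geo)
  show sm: "summable (\<lambda>n. \<bar>\<beta> n\<bar> * r ^ Suc n)"
    by (rule summable_comparison_test[OF _ sums_summable[OF U[of 1]]]) (use amgm[of 1] r in \<open>auto simp: abs_mult\<close>)
  have St: "(\<Sum>n. \<bar>\<beta> n\<bar> * r ^ Suc n) \<le> R * (M\<^sup>2 / (2 * t) + t / 2)" if t: "0 < t" for t
  proof -
    have "(\<Sum>n. \<bar>\<beta> n\<bar> * r ^ Suc n) \<le> r / (2 * t) * (\<Sum>n. (\<beta> n)\<^sup>2 * r ^ n) + t / 2 * R"
      using suminf_le[OF amgm[OF t] sm sums_summable[OF U]] sums_unique[OF U] by simp
    also have "\<dots> \<le> r / (2 * t) * (M\<^sup>2 / (1 - r)) + t / 2 * R"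
      using sq(2) r t by (intro add_right_mono mult_left_mono) auto
    also have "\<dots> = R * (M\<^sup>2 / (2 * t) + t / 2)"
      by (simp add: R_def distrib_left mult.commute)
    finally show ?thesis .
  qed
  show "(\<Sum>n. \<bar>\<beta> n\<bar> * r ^ Suc n) \<le> M * (r / (1 - r))"
  proof (cases "M = 0")
    case True
    have "(\<Sum>n. \<bar>\<beta> n\<bar> * r ^ Suc n) \<le> M * R + e" if "0 < e" for e
      using St[of "2 * e / R"] that R True by simp
    thus ?thesis unfolding R_def by (rule field_le_epsilon)
  next
    case False
    thus ?thesis using St[of M] M by (simp add: R_def power2_eq_square mult.commute)
  qed
qed

lemma Taylor_coefficients_of_sums_on_disk:
  fixes h :: "complex \<Rightarrow> complex"
  assumes "\<And>z. z \<in> ball 0 1 \<Longrightarrow> (\<lambda>n. a n * z ^ n) sums h z"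
  shows "a n = (deriv ^^ n) h 0 / fact n"
proof -
  have "eventually (\<lambda>z. z \<in> ball (0::complex) 1) (nhds 0)"
    by (rule eventually_nhds_in_open) auto
  hence "h has_fps_expansion Abs_fps a"
    by (intro has_fps_expansionI) (auto elim!: eventually_mono intro: assms)
  from fps_nth_fps_expansion[OF this, of n] show ?thesis by simp
qed

lemma admissible_Taylor_coefficients:
  assumes "admissible \<gamma> k h g a b"
  shows "a n = (deriv ^^ n) h 0 / fact n"
    and "b (Suc n) = (deriv ^^ Suc n) g 0 / fact (Suc n)"
proof -
  show "a n = (deriv ^^ n) h 0 / fact n"
    using assms by (intro Taylor_coefficients_of_sums_on_disk) (auto simp: admissible_def)
  define b' where "b' = (\<lambda>n. if n = 0 then 0 else b n)"
  have "(\<lambda>n. b' n * z ^ n) sums g z" if "z \<in> ball 0 1" for z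
  proof -
    have "(\<lambda>n. b' (Suc n) * z ^ Suc n) sums g z"
      using assms that by (simp add: admissible_def b'_def)
    from sums_Suc[OF this] show ?thesis by (simp add: b'_def)
  qed
  from Taylor_coefficients_of_sums_on_disk[OF this, of "Suc n"]
  show "b (Suc n) = (deriv ^^ Suc n) g 0 / fact (Suc n)" by (simp add: b'_def)
qed

lemma square_sum_le_of_bounded:
  fixes \<beta> :: "nat \<Rightarrow> real"
  assumes \<beta>: "\<And>n. \<bar>\<beta> n\<bar> \<le> c" and r: "0 \<le> r" "r < 1"
  shows "summable (\<lambda>n. (\<beta> n)\<^sup>2 * r ^ n)" and "(\<Sum>n. (\<beta> n)\<^sup>2 * r ^ n) \<le> c\<^sup>2 / (1 - r)"
proof -
  have geo: "(\<lambda>n. c\<^sup>2 * r ^ n) sums (c\<^sup>2 / (1 - r))"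
    using sums_mult[OF geometric_sums[of r], of "c\<^sup>2"] r by simp
  have le: "(\<beta> n)\<^sup>2 * r ^ n \<le> c\<^sup>2 * r ^ n" for n
    using \<beta>[of n] r by (intro mult_right_mono) (auto simp: abs_le_square_iff[symmetric] power2_abs
        intro: power_mono order.trans[OF abs_ge_zero])
  show sm: "summable (\<lambda>n. (\<beta> n)\<^sup>2 * r ^ n)"
    by (rule summable_comparison_test[OF _ sums_summable[OF geo]]) (use le r in \<open>auto simp: abs_mult\<close>)
  show "(\<Sum>n. (\<beta> n)\<^sup>2 * r ^ n) \<le> c\<^sup>2 / (1 - r)"
    using suminf_le[OF le sm sums_summable[OF geo]] sums_unique[OF geo] by simp
qed

lemma bohr_radius_arith:
  fixes A \<gamma> k r :: real
  assumes A: "0 \<le> A" "A \<le> 1" and g: "0 \<le> \<gamma>" and k: "0 \<le> k"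
    and r: "0 \<le> r" "r \<le> (1 + \<gamma>) / (3 + 2 * k + \<gamma>)"
  shows "r < 1" and "A + (1 + k) * ((1 - A\<^sup>2) / (1 + \<gamma>) * (r / (1 - r))) \<le> 1"
proof -
  show r1: "r < 1" using r g k by (smt (verit) divide_less_eq_1_pos)
  have R: "(1 + k) * (r / (1 - r)) \<le> (1 + \<gamma>) / 2"
    using r r1 g k by (simp add: le_divide_eq divide_le_eq field_simps)
  have "(1 + k) * ((1 - A\<^sup>2) / (1 + \<gamma>) * (r / (1 - r))) = (1 - A\<^sup>2) * ((1 + k) * (r / (1 - r))) / (1 + \<gamma>)"
    by (simp add: mult_ac)
  also have "\<dots> \<le> (1 - A\<^sup>2) * ((1 + \<gamma>) / 2) / (1 + \<gamma>)"
    using A g R by (intro divide_right_mono mult_left_mono) (auto simp: abs_square_le_1)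
  also have "\<dots> = (1 - A\<^sup>2) / 2" using g by (simp add: field_simps)
  finally have "A + (1 + k) * ((1 - A\<^sup>2) / (1 + \<gamma>) * (r / (1 - r))) \<le> A + (1 - A\<^sup>2) / 2" by simp
  also have "\<dots> \<le> 1" using zero_le_power2[of "1 - A"] by (simp add: power2_eq_square field_simps)
  finally show "A + (1 + k) * ((1 - A\<^sup>2) / (1 + \<gamma>) * (r / (1 - r))) \<le> 1" .
qed

lemma bohr_sum_le_1:
  assumes g: "0 \<le> \<gamma>" "\<gamma> < 1" and k: "0 \<le> k"
    and adm: "admissible \<gamma> k h g a b" and r: "0 \<le> r" "r \<le> (1 + \<gamma>) / (3 + 2 * k + \<gamma>)"
  shows "bohr_sum a b r \<le> 1"
proof -
  from adm have holh: "h holomorphic_on Omega \<gamma>" and holg: "g holomorphic_on Omega \<gamma>"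
    and bdh: "\<And>z. z \<in> Omega \<gamma> \<Longrightarrow> norm (h z) \<le> 1"
    and derg: "\<And>z. z \<in> Omega \<gamma> \<Longrightarrow> norm (deriv g z) \<le> k * norm (deriv h z)"
    unfolding admissible_def by auto
  note a = admissible_Taylor_coefficients(1)[OF adm]
  note b = admissible_Taylor_coefficients(2)[OF adm]
  note disk = ball_subset_Omega[OF g]
  define A where "A = norm (a 0)"
  have "0 \<in> Omega \<gamma>" using disk by auto
  hence A: "0 \<le> A" "A \<le> 1" using bdh a[of 0] by (auto simp: A_def)
  define c where "c = (1 - A\<^sup>2) / (1 + \<gamma>)"
  have c: "0 \<le> c" using A g by (simp add: c_def abs_square_le_1)
  have a_le: "\<bar>norm (a (Suc n))\<bar> \<le> c" for n
    using Taylor_coeff_bound_Omega[OF g holh bdh, of "Suc n"] a by (simp add: c_def A_def)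
  note arith = bohr_radius_arith[OF A g(1) k r, folded c_def]
  show ?thesis
  proof (cases "r = 0")
    case True
    thus ?thesis using A powser_zero[of "\<lambda>n. norm (a n)"] by (simp add: bohr_sum_def A_def)
  next
    case False
    hence r0: "0 < r" using r by simp
    note sa = square_sum_le_of_bounded[of "\<lambda>n. norm (a (Suc n))", OF a_le r(1) arith(1)]
    have der1: "norm (deriv g z) \<le> k * norm (deriv h z)" if "z \<in> ball 0 1" for z
      using derg disk that by blast
    have hol1: "h holomorphic_on ball 0 1" "g holomorphic_on ball 0 1"
      using holomorphic_on_subset[OF holh disk] holomorphic_on_subset[OF holg disk] .
    note sq = Taylor_square_sum_le_of_deriv_le[OF hol1 der1 r(1) arith(1), folded a b]
    have sb_le: "(\<Sum>n. (norm (b (Suc n)))\<^sup>2 * r ^ n) \<le> (k * c)\<^sup>2 / (1 - r)"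
      using order.trans[OF sq(3) mult_left_mono[OF sa(2)]] by (simp add: power_mult_distrib)
    note SA = weighted_sum_le_of_square_sum[OF r0 arith(1) c sa]
    note SB = weighted_sum_le_of_square_sum[OF r0 arith(1) _ sq(2) sb_le]
    have "summable (\<lambda>n. norm (a (Suc n)) * r ^ Suc n)" using SA(1) by simp
    from sums_Suc[OF summable_sums[OF this]]
    have "(\<Sum>n. norm (a n) * r ^ n) = A + (\<Sum>n. norm (a (Suc n)) * r ^ Suc n)"
      by (simp add: sums_iff A_def add.commute)
    hence "bohr_sum a b r \<le> A + c * (r / (1 - r)) + k * c * (r / (1 - r))"
      using SA(2) SB(2) c k by (simp add: bohr_sum_def)
    thus ?thesis using arith(2) by (simp add: algebra_simps add_divide_distrib)
  qed
qed

section \<open>Sharpness of the radius\<close>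

definition bohr_extremal :: "real \<Rightarrow> real \<Rightarrow> complex \<Rightarrow> complex" where
  "bohr_extremal \<gamma> s z = - Moebius_function 0 (of_real s) (Omega_to_disk \<gamma> z)"

definition bohr_extremal_coeff :: "real \<Rightarrow> real \<Rightarrow> nat \<Rightarrow> complex" where
  "bohr_extremal_coeff \<gamma> s n =
     of_real (if n = 0 then s else - ((1 - s\<^sup>2) / (1 + \<gamma>) * ((\<gamma> + s) / (1 + \<gamma>)) ^ (n - 1)))"

lemma bohr_extremal_coeff_Suc:
  "bohr_extremal_coeff \<gamma> s (Suc n) = - of_real ((1 - s\<^sup>2) / (1 + \<gamma>) * ((\<gamma> + s) / (1 + \<gamma>)) ^ n)"
  by (simp add: bohr_extremal_coeff_def)

lemma bohr_extremal_holomorphic: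
  assumes g: "0 \<le> \<gamma>" "\<gamma> < 1" and s: "0 \<le> s" "s < 1"
  shows "bohr_extremal \<gamma> s holomorphic_on Omega \<gamma>"
proof -
  have "(Moebius_function 0 (of_real s) \<circ> Omega_to_disk \<gamma>) holomorphic_on Omega \<gamma>"
    by (rule holomorphic_on_compose_gen[OF Omega_to_disk_holomorphic[OF g] Moebius_function_holomorphic])
       (use s norm_Omega_to_disk_lt_1[OF g] in auto)
  thus ?thesis
    unfolding bohr_extremal_def[abs_def] by (intro holomorphic_intros) (simp add: o_def)
qed

lemma norm_bohr_extremal_lt_1:
  assumes g: "0 \<le> \<gamma>" "\<gamma> < 1" and s: "0 \<le> s" "s < 1" and z: "z \<in> Omega \<gamma>"
  shows "norm (bohr_extremal \<gamma> s z) < 1"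
  using Moebius_function_norm_lt_1[of "of_real s" "Omega_to_disk \<gamma> z" 0] s
    norm_Omega_to_disk_lt_1[OF g z] by (simp add: bohr_extremal_def)

lemma bohr_extremal_eq_fraction:
  assumes g: "0 \<le> \<gamma>" "\<gamma> < 1" and s: "0 \<le> s" "s < 1" and z: "z \<in> Omega \<gamma>"
  defines "A \<equiv> 1 + of_real \<gamma> - of_real \<gamma> * z"
  shows "A - of_real s * z \<noteq> 0" and "bohr_extremal \<gamma> s z = (of_real s * A - z) / (A - of_real s * z)"
proof -
  define w where "w = Omega_to_disk \<gamma> z"
  have A: "A \<noteq> 0" using Omega_to_disk_denominator_nonzero[OF g z] by (simp add: A_def)
  have w: "w = z / A" by (simp add: w_def Omega_to_disk_def A_def)
  have sw: "1 - of_real s * w \<noteq> 0"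
  proof
    assume "1 - of_real s * w = 0"
    hence "norm (of_real s * w) = 1" by (metis eq_iff_diff_eq_0 norm_one)
    moreover have "norm (of_real s * w) < 1"
      using s norm_Omega_to_disk_lt_1[OF g z] mult_left_le_one_le[of "norm w" s]
      by (simp add: w_def norm_mult)
    ultimately show False by simp
  qed
  thus "A - of_real s * z \<noteq> 0" using A by (simp add: w field_simps)
  show "bohr_extremal \<gamma> s z = (of_real s * A - z) / (A - of_real s * z)"
    using A sw by (simp add: bohr_extremal_def Moebius_function_simple w_def[symmetric] w field_simps)
qed

lemma bohr_extremal_eq:
  assumes g: "0 \<le> \<gamma>" "\<gamma> < 1" and s: "0 \<le> s" "s < 1" and z: "norm z < 1"
  defines "C \<equiv> (1 - s\<^sup>2) / (1 + \<gamma>)" and "q \<equiv> (\<gamma> + s) / (1 + \<gamma>)"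
  shows "bohr_extremal \<gamma> s z = of_real s - of_real C * z / (1 - of_real q * z)"
proof -
  have zO: "z \<in> Omega \<gamma>" using ball_subset_Omega[OF g] z by auto
  define A where "A = 1 + of_real \<gamma> - of_real \<gamma> * z"
  note frac = bohr_extremal_eq_fraction[OF g s zO, folded A_def]
  note g1 = one_plus_of_real_nonzero[OF g(1)]
  have "q * (1 + \<gamma>) = \<gamma> + s" using g by (simp add: q_def)
  hence qc: "of_real q * (1 + of_real \<gamma>) = of_real \<gamma> + (of_real s :: complex)"
    by (metis of_real_1 of_real_add of_real_mult)
  have "C * (1 + \<gamma>) = 1 - s * s" using g by (simp add: C_def power2_eq_square)
  hence Cc: "of_real C * (1 + of_real \<gamma>) = 1 - of_real s * (of_real s :: complex)"
    by (metis of_real_1 of_real_add of_real_diff of_real_mult)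
  have "(1 + of_real \<gamma>) * (1 - of_real q * z) = (1 + of_real \<gamma>) - (of_real q * (1 + of_real \<gamma>)) * z"
    by (simp add: algebra_simps)
  hence den: "A - of_real s * z = (1 + of_real \<gamma>) * (1 - of_real q * z)"
    unfolding qc by (simp add: A_def algebra_simps)
  have "(1 + of_real \<gamma>) * (of_real s * (1 - of_real q * z) - of_real C * z)
      = of_real s * (1 + of_real \<gamma>) - of_real s * (of_real q * (1 + of_real \<gamma>)) * z
        - (of_real C * (1 + of_real \<gamma>)) * z"
    by (simp add: algebra_simps)
  hence "of_real s * A - z = (1 + of_real \<gamma>) * (of_real s * (1 - of_real q * z) - of_real C * z)"
    unfolding qc Cc by (simp add: A_def algebra_simps)
  hence "bohr_extremal \<gamma> s z = (of_real s * (1 - of_real q * z) - of_real C * z) / (1 - of_real q * z)"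
    using frac den g1 by simp
  moreover have "1 - of_real q * z \<noteq> 0" using frac(1) den by auto
  ultimately show ?thesis by (simp add: diff_divide_distrib)
qed

lemma bohr_extremal_sums:
  assumes g: "0 \<le> \<gamma>" "\<gamma> < 1" and s: "0 \<le> s" "s < 1" and z: "norm z < 1"
  shows "(\<lambda>n. bohr_extremal_coeff \<gamma> s n * z ^ n) sums bohr_extremal \<gamma> s z"
proof -
  define C where "C = (1 - s\<^sup>2) / (1 + \<gamma>)"
  define q where "q = (\<gamma> + s) / (1 + \<gamma>)"
  have q: "0 \<le> q" "q < 1" using g s by (auto simp: q_def field_simps)
  have "norm (of_real q * z) < 1"
    using q z mult_left_le_one_le[of "norm z" q] by (simp add: norm_mult)
  hence "(\<lambda>n. (- of_real C * z) * (of_real q * z) ^ n) sums ((- of_real C * z) * (1 / (1 - of_real q * z)))"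
    by (intro sums_mult geometric_sums)
  moreover note bohr_extremal_coeff_Suc[of \<gamma> s, folded C_def q_def]
  ultimately have "(\<lambda>n. bohr_extremal_coeff \<gamma> s (Suc n) * z ^ Suc n) sums (- of_real C * z / (1 - of_real q * z))"
    by (simp add: power_mult_distrib mult_ac)
  from sums_Suc[OF this] show ?thesis
    using bohr_extremal_eq[OF g s z] by (simp add: bohr_extremal_coeff_def C_def q_def)
qed

lemma admissible_bohr_extremal:
  assumes g: "0 \<le> \<gamma>" "\<gamma> < 1" and k: "0 \<le> k" and s: "0 \<le> s" "s < 1"
  shows "admissible \<gamma> k (bohr_extremal \<gamma> s) (\<lambda>z. of_real k * (bohr_extremal \<gamma> s z - of_real s))
           (bohr_extremal_coeff \<gamma> s) (\<lambda>n. of_real k * bohr_extremal_coeff \<gamma> s n)"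
proof -
  note hol = bohr_extremal_holomorphic[OF g s]
  have "deriv (\<lambda>z. of_real k * (bohr_extremal \<gamma> s z - of_real s)) z = of_real k * deriv (bohr_extremal \<gamma> s) z"
    if "z \<in> Omega \<gamma>" for z
  proof -
    have "(bohr_extremal \<gamma> s has_field_derivative deriv (bohr_extremal \<gamma> s) z) (at z)"
      by (rule holomorphic_derivI[OF hol _ that]) (simp add: Omega_def)
    hence "((\<lambda>z. of_real k * (bohr_extremal \<gamma> s z - of_real s)) has_field_derivative
        of_real k * deriv (bohr_extremal \<gamma> s) z) (at z)"
      by (auto intro!: derivative_eq_intros)
    thus ?thesis by (rule DERIV_imp_deriv)
  qed
  moreover have "(\<lambda>n. of_real k * bohr_extremal_coeff \<gamma> s (n + 1) * z ^ (n + 1))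
      sums (of_real k * (bohr_extremal \<gamma> s z - of_real s))" if "z \<in> ball 0 1" for z
  proof -
    have "(\<lambda>n. bohr_extremal_coeff \<gamma> s (Suc n) * z ^ Suc n) sums (bohr_extremal \<gamma> s z - of_real s)"
      using sums_Suc_iff[of "\<lambda>n. bohr_extremal_coeff \<gamma> s n * z ^ n"] bohr_extremal_sums[OF g s] that
      by (simp add: bohr_extremal_coeff_def)
    from sums_mult[OF this, of "of_real k"] show ?thesis by (simp add: mult.assoc)
  qed
  ultimately show ?thesis
    using hol norm_bohr_extremal_lt_1[OF g s] bohr_extremal_sums[OF g s] k
    by (auto simp: admissible_def norm_mult intro!: holomorphic_intros less_imp_le)
qed

lemma bohr_sum_bohr_extremal:
  assumes g: "0 \<le> \<gamma>" "\<gamma> < 1" and k: "0 \<le> k" and s: "0 \<le> s" "s < 1" and r: "0 \<le> r" "r < 1"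
  defines "C \<equiv> (1 - s\<^sup>2) / (1 + \<gamma>)" and "q \<equiv> (\<gamma> + s) / (1 + \<gamma>)"
  shows "bohr_sum (bohr_extremal_coeff \<gamma> s) (\<lambda>n. of_real k * bohr_extremal_coeff \<gamma> s n) r
           = s + (1 + k) * (C * r / (1 - q * r))"
proof -
  have C: "0 \<le> C" using g s by (simp add: C_def abs_square_le_1)
  have q: "0 \<le> q" "q < 1" using g s by (auto simp: q_def field_simps)
  have qr: "0 \<le> q * r" "q * r < 1" using q r mult_left_le_one_le[of r q] by auto
  have tail: "norm (bohr_extremal_coeff \<gamma> s (Suc n)) * r ^ Suc n = C * r * (q * r) ^ n" for n
  proof -
    have "norm (bohr_extremal_coeff \<gamma> s (Suc n)) = C * q ^ n"
      unfolding bohr_extremal_coeff_Suc C_def[symmetric] q_def[symmetric] norm_minus_cancel norm_of_real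
      using C q by simp
    thus ?thesis by (simp add: power_mult_distrib)
  qed
  have geo: "(\<lambda>n. norm (bohr_extremal_coeff \<gamma> s (Suc n)) * r ^ Suc n) sums (C * r / (1 - q * r))"
    unfolding tail using sums_mult[OF geometric_sums[of "q * r"], of "C * r"] qr by simp
  from sums_Suc[OF geo] have "(\<Sum>n. norm (bohr_extremal_coeff \<gamma> s n) * r ^ n) = s + C * r / (1 - q * r)"
    using s by (simp add: sums_iff bohr_extremal_coeff_def)
  moreover have "(\<Sum>n. norm (of_real k * bohr_extremal_coeff \<gamma> s (n + 1)) * r ^ (n + 1)) = k * (C * r / (1 - q * r))"
    using sums_mult[OF geo, of k] k by (simp add: norm_mult sums_iff mult.assoc)
  ultimately show ?thesis by (simp add: bohr_sum_def algebra_simps add_divide_distrib)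
qed

lemma bohr_radius_sharp:
  assumes g: "0 \<le> \<gamma>" "\<gamma> < 1" and k: "0 \<le> k"
    and r: "(1 + \<gamma>) / (3 + 2 * k + \<gamma>) < r" "r < 1"
  shows "\<exists>h g a b. admissible \<gamma> k h g a b \<and> bohr_sum a b r > 1"
proof -
  have r0: "0 < r" using r g k by (smt (verit) divide_pos_pos)
  have "1 + \<gamma> < r * (3 + 2 * k + \<gamma>)" using r(1) g k by (simp add: divide_less_eq mult.commute)
  moreover have r2k: "0 < r * (2 + k)" using r0 k by simp
  ultimately have "(1 + \<gamma> - r * (1 + k + \<gamma>)) / (r * (2 + k)) < 1"
    by (simp add: pos_divide_less_eq algebra_simps)
  \<comment> \<open>for s above this threshold the extremal Bohr sum exceeds 1\<close>
  then obtain s where s: "max 0 ((1 + \<gamma> - r * (1 + k + \<gamma>)) / (r * (2 + k))) < s" "s < 1"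
    using dense by (metis max_less_iff_conj zero_less_one)
  hence s0: "0 \<le> s" "s < 1" by auto
  have "1 + \<gamma> - r * (1 + k + \<gamma>) < s * (r * (2 + k))"
    using s(1) r2k by (simp add: pos_divide_less_eq)
  hence key: "1 + \<gamma> - (\<gamma> + s) * r < (1 + k) * (1 + s) * r"
    by (simp add: algebra_simps)
  define C where "C = (1 - s\<^sup>2) / (1 + \<gamma>)"
  define q where "q = (\<gamma> + s) / (1 + \<gamma>)"
  have "\<gamma> * r \<le> \<gamma>" "s * r \<le> s" using g s0 r r0 by (simp_all add: mult_left_le)
  hence "q * r < 1" using s0 g by (simp add: q_def field_simps)
  hence D: "0 < 1 - q * r" by simp
  have "(1 + \<gamma>) * (1 - q * r) = 1 + \<gamma> - (\<gamma> + s) * r" using g by (simp add: q_def field_simps)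
  hence "(1 - s) * ((1 + \<gamma>) * (1 - q * r)) < (1 - s) * ((1 + k) * (1 + s) * r)"
    using key s0 by (intro mult_strict_left_mono) auto
  hence "(1 - s) * (1 - q * r) < (1 + k) * C * r"
    using g by (simp add: C_def power2_eq_square field_simps)
  hence "1 - s < (1 + k) * C * r / (1 - q * r)"
    using D by (simp add: pos_less_divide_eq)
  hence "1 < s + (1 + k) * (C * r / (1 - q * r))" by simp
  hence "1 < bohr_sum (bohr_extremal_coeff \<gamma> s) (\<lambda>n. of_real k * bohr_extremal_coeff \<gamma> s n) r"
    using bohr_sum_bohr_extremal[OF g k s0 less_imp_le[OF r0] r(2)] by (simp only: C_def q_def)
  with admissible_bohr_extremal[OF g k s0] show ?thesis by blast
qed

theorem theorem4:
  fixes \<gamma> k :: real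
  assumes "0 \<le> \<gamma>" "\<gamma> < 1" "0 \<le> k" "k \<le> 1"
  shows "(\<forall>h g a b r. admissible \<gamma> k h g a b \<and> 0 \<le> r \<and> r \<le> (1 + \<gamma>) / (3 + 2 * k + \<gamma>)
            \<longrightarrow> bohr_sum a b r \<le> 1)
       \<and> (\<forall>r. (1 + \<gamma>) / (3 + 2 * k + \<gamma>) < r \<and> r < 1
            \<longrightarrow> (\<exists>h g a b. admissible \<gamma> k h g a b \<and> bohr_sum a b r > 1))"
  using bohr_sum_le_1[OF assms(1-3)] bohr_radius_sharp[OF assms(1-3)] by blast

end
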